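(* Assume the standing assumptions (A) below. Let $\sigma_a\in\mathcal F_{\underline\sigma_a}^{\overline\sigma_a}(\Omega)$ and $\sigma_b\in\mathcal F_{\underline\sigma_b}^{\overline\sigma_b}(\Omega)$, and let $g\in L^\infty(\Gamma_-)$ with $\underline g:=\inf_{\Gamma_-}g$, $\overline g:=\sup_{\Gamma_-}g$ satisfy $\underline g>0$ and \[ \overline g\le\begin{cases}\inf_\Omega \dfrac{\sigma_a}{\sigma_b}, & \text{when } \sigma_s\equiv 0,\\[2mm] \max\Big(\inf_\Omega\dfrac{\sigma_a}{\sigma_b},\ 2\underline\theta\inf_\Omega\dfrac{\sigma_s}{\sigma_b}\Big), & \text{when }\sigma_s\ne 0.\end{cases} \] Let $u$ be the corresponding unique non-negative bounded solution of \[ \mathbf v\cdot\nabla u+(\sigma_a+\sigma_s)u+\sigma_b\langle u\rangle u=\sigma_s Ku\ \text{ in } X,\qquad u=g\ \text{ on }\Gamma_- . \] Then $u\ge\mathfrak c$ for some constant $\mathfrak c>0$.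
   Context: Let $d\ge 2$, $\Omega\subset\mathbb R^d$ a domain with unit outer normal $\boldsymbol\nu$, $\mathbb S^{d-1}$ the unit sphere with normalized surface measure $d\mathbf v$, $X:=\Omega\times\mathbb S^{d-1}$, $\Gamma_-:=\{(\mathbf x,\mathbf v)\in\partial\Omega\times\mathbb S^{d-1}: -\boldsymbol\nu(\mathbf x)\cdot\mathbf v>0\}$, and $\langle u\rangle(\mathbf x):=\int_{\mathbb S^{d-1}}u(\mathbf x,\mathbf v)d\mathbf v$. The scattering operator is $Ku(\mathbf x,\mathbf v):=\int_{\mathbb S^{d-1}}\Theta(\mathbf v,\mathbf v')u(\mathbf x,\mathbf v')d\mathbf v'$ with $\Theta$ symmetric and $\int\Theta(\mathbf v,\mathbf v')d\mathbf v'=\int\Theta(\mathbf v,\mathbf v')d\mathbf v=1$. For a set $Y$ and constants $0<\underline f\le\overline f<\infty$, $\mathcal F_{\underline f}^{\overline f}(Y):=\{f\in L^\infty(Y):\underline f\le f\le\overline f \text{ a.e.}\}$. Standing assumption (A): (i) $\Omega$ is bounded, convex and smooth; (ii) $\sigma_s\in\mathcal F_{\underline\sigma_s}^{\overline\sigma_s}(\Omega)$; (iii) $\Theta\in\mathcal F_{\underline\theta}^{\overline\theta}(\mathbb S^{d-1}\times\mathbb S^{d-1})$, with $\underline\theta$ the lower bound of $\Theta$. *)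

theory Defs
  imports "HOL-Analysis.Analysis"
begin

primrec Ck :: "nat \<Rightarrow> ('a::real_normed_vector \<Rightarrow> real) \<Rightarrow> bool" where
  "Ck 0 f = continuous_on UNIV f"
| "Ck (Suc k) f = (\<exists>f'. (\<forall>x. (f has_derivative f' x) (at x)) \<and> (\<forall>h. Ck k (\<lambda>x. f' x h)))"

definition smooth_fun :: "('a::real_normed_vector \<Rightarrow> real) \<Rightarrow> bool" where
  "smooth_fun f \<longleftrightarrow> (\<forall>k. Ck k f)"

definition defining_fun :: "(real^'n) set \<Rightarrow> (real^'n \<Rightarrow> real) \<Rightarrow> bool" where
  "defining_fun \<Omega> \<rho> \<longleftrightarrow> smooth_fun \<rho> \<and> (\<forall>x. x \<in> \<Omega> \<longleftrightarrow> \<rho> x < 0) \<and>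
     (\<forall>x\<in>frontier \<Omega>. \<rho> x = 0 \<and> frechet_derivative \<rho> (at x) \<noteq> (\<lambda>h. 0))"

definition smooth_boundary :: "(real^'n) set \<Rightarrow> bool" where
  "smooth_boundary \<Omega> \<longleftrightarrow> (\<exists>\<rho>. defining_fun \<Omega> \<rho>)"

definition outer_normal :: "(real^'n) set \<Rightarrow> real^'n \<Rightarrow> real^'n" where
  "outer_normal \<Omega> x =
     (let \<rho> = (SOME \<rho>. defining_fun \<Omega> \<rho>);
          gr = (\<chi> i. frechet_derivative \<rho> (at x) (axis i 1))
      in gr /\<^sub>R norm gr)"

definition bcs_domain :: "(real^'n) set \<Rightarrow> bool" where
  "bcs_domain \<Omega> \<longleftrightarrow> open \<Omega> \<and> connected \<Omega> \<and> \<Omega> \<noteq> {} \<and> bounded \<Omega> \<and> convex \<Omega> \<and> smooth_boundary \<Omega>"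

text \<open>Normalized surface measure on the unit sphere: push-forward of the uniform
probability measure on the unit ball under radial projection.\<close>
definition sph :: "(real^'n) measure" where
  "sph = distr (uniform_measure lborel (ball 0 1)) borel (\<lambda>x. x /\<^sub>R norm x)"

definition Om_meas :: "(real^'n) set \<Rightarrow> (real^'n) measure" where
  "Om_meas \<Omega> = restrict_space lborel \<Omega>"

definition X_meas :: "(real^'n) set \<Rightarrow> ((real^'n) \<times> (real^'n)) measure" where
  "X_meas \<Omega> = restrict_space (lborel \<Otimes>\<^sub>M sph) (\<Omega> \<times> sphere 0 1)"

definition Gamma_minus :: "(real^'n) set \<Rightarrow> ((real^'n) \<times> (real^'n)) set" where
  "Gamma_minus \<Omega> = {(x, v). x \<in> frontier \<Omega> \<and> v \<in> sphere 0 1 \<and> - (outer_normal \<Omega> x \<bullet> v) > 0}"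

definition tau :: "(real^'n) set \<Rightarrow> real^'n \<Rightarrow> real^'n \<Rightarrow> real" where
  "tau \<Omega> x v = Sup {t. 0 \<le> t \<and> (\<forall>s\<in>{0..t}. x - s *\<^sub>R v \<in> \<Omega>)}"

text \<open>A measure on Gamma_- (only its null sets matter here): push-forward of dx dv
under the backward exit map; it has the same null sets as the surface measure on Gamma_-.\<close>
definition Gamma_meas :: "(real^'n) set \<Rightarrow> ((real^'n) \<times> (real^'n)) measure" where
  "Gamma_meas \<Omega> = restrict_space
      (distr (X_meas \<Omega>) (borel \<Otimes>\<^sub>M borel) (\<lambda>(x, v). (x - tau \<Omega> x v *\<^sub>R v, v)))
      (Gamma_minus \<Omega>)"

definition ess_inf :: "'a measure \<Rightarrow> ('a \<Rightarrow> real) \<Rightarrow> real" where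
  "ess_inf M f = Sup {c. AE x in M. c \<le> f x}"

definition ess_sup :: "'a measure \<Rightarrow> ('a \<Rightarrow> real) \<Rightarrow> real" where
  "ess_sup M f = Inf {c. AE x in M. f x \<le> c}"

definition Linf :: "'a measure \<Rightarrow> ('a \<Rightarrow> real) \<Rightarrow> bool" where
  "Linf M f \<longleftrightarrow> f \<in> borel_measurable M \<and> (\<exists>B. AE x in M. \<bar>f x\<bar> \<le> B)"

definition F_class :: "'a measure \<Rightarrow> real \<Rightarrow> real \<Rightarrow> ('a \<Rightarrow> real) \<Rightarrow> bool" where
  "F_class M lo hi f \<longleftrightarrow> 0 < lo \<and> lo \<le> hi \<and> f \<in> borel_measurable M \<and>
      (AE x in M. lo \<le> f x \<and> f x \<le> hi)"

definition avg :: "(real^'n \<Rightarrow> real^'n \<Rightarrow> real) \<Rightarrow> real^'n \<Rightarrow> real" where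
  "avg u x = (\<integral>v. u x v \<partial>sph)"

definition Kop :: "(real^'n \<Rightarrow> real^'n \<Rightarrow> real) \<Rightarrow> (real^'n \<Rightarrow> real^'n \<Rightarrow> real)
                  \<Rightarrow> real^'n \<Rightarrow> real^'n \<Rightarrow> real" where
  "Kop \<Theta> u x v = (\<integral>v'. \<Theta> v v' * u x v' \<partial>sph)"

text \<open>Mild (integrated along characteristics) formulation of
  v.grad u + (sa + ss) u + sb <u> u = ss K u in X,  u = g on Gamma_-,
  for a non-negative bounded u.\<close>
definition is_solution ::
  "(real^'n) set \<Rightarrow> (real^'n \<Rightarrow> real) \<Rightarrow> (real^'n \<Rightarrow> real) \<Rightarrow> (real^'n \<Rightarrow> real)
   \<Rightarrow> (real^'n \<Rightarrow> real^'n \<Rightarrow> real) \<Rightarrow> (real^'n \<Rightarrow> real^'n \<Rightarrow> real)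
   \<Rightarrow> (real^'n \<Rightarrow> real^'n \<Rightarrow> real) \<Rightarrow> bool" where
  "is_solution \<Omega> sa ss sb \<Theta> g u \<longleftrightarrow>
     (\<lambda>(x, v). u x v) \<in> borel_measurable (lborel \<Otimes>\<^sub>M sph) \<and>
     (\<exists>B. AE z in X_meas \<Omega>. 0 \<le> u (fst z) (snd z) \<and> u (fst z) (snd z) \<le> B) \<and>
     (AE z in X_meas \<Omega>.
        u (fst z) (snd z) =
          g (fst z - tau \<Omega> (fst z) (snd z) *\<^sub>R snd z) (snd z)
          + (LINT s:{0..tau \<Omega> (fst z) (snd z)}|lborel.
               (let y = fst z - s *\<^sub>R snd z; v = snd z in
                  ss y * Kop \<Theta> u y v - (sa y + ss y + sb y * avg u y) * u y v)))"

end

(* Along the backward characteristic s |-> x - s v, which leaves Omega after time L = tau x v,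
   the mild equation says that psi s = u (x - s v) v equals G + int_s^L F, where G is the
   boundary value at the exit point and F = ss K u - (sa + ss + sb <u>) u. The gain term is
   non-negative and u, <u> and the coefficients are bounded, so F >= - M psi, and Gronwall's
   inequality gives u x v >= G exp (- M L) >= (ess inf g) exp (- M diam Omega). Convexity and
   smoothness of Omega make the exit point lie in Gamma_-, where g is bounded below. As the
   equation holds only almost everywhere in X, Fubini and the translation invariance of Lebesgue
   measure show that for almost every (x, v) it holds at almost every point of the characteristic.
   Only ess inf g > 0 and the upper bounds of the data enter. *)

theory Submission
  imports Defs "HOL-Probability.Probability_Measure"
begin

section \<open>Almost everywhere statements on the phase space\<close>

lemma sets_sph [measurable_cong, simp]: "sets (sph :: (real^'n) measure) = sets borel"
  unfolding sph_def by simp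

lemma space_sph [simp]: "space (sph :: (real^'n) measure) = UNIV"
  unfolding sph_def by simp

lemma prob_space_sph: "prob_space (sph :: (real^'n) measure)"
  unfolding sph_def
proof (rule prob_space.prob_space_distr)
  show "prob_space (uniform_measure lborel (ball (0::real^'n) 1))"
    using content_ball_pos[of 1 "0::real^'n"] emeasure_lborel_ball_finite[of "0::real^'n" 1]
    by (intro prob_space_uniform_measure) (auto simp: measure_def enn2real_positive_iff)
qed simp

interpretation sph: prob_space "sph :: (real^'n) measure"
  by (rule prob_space_sph)

interpretation lborel_sph: pair_sigma_finite "lborel :: (real^'n) measure" "sph :: (real^'n) measure" ..

interpretation sph_lborel: pair_sigma_finite "sph :: (real^'n) measure" "lborel :: (real^'n) measure" ..

interpretation sph_sph: pair_sigma_finite "sph :: (real^'n) measure" "sph :: (real^'n) measure" ..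

lemma AE_sph_in_sphere: "AE v in (sph :: (real^'n) measure). v \<in> sphere 0 1"
proof -
  have "AE x in lborel. x \<in> ball (0::real^'n) 1 \<longrightarrow> x /\<^sub>R norm x \<in> sphere 0 1"
    using AE_lborel_singleton[of "0::real^'n"] by (rule eventually_mono) simp
  then have "AE x in uniform_measure lborel (ball (0::real^'n) 1). x /\<^sub>R norm x \<in> sphere 0 1"
    by (intro AE_uniform_measureI) auto
  then show ?thesis
    unfolding sph_def by (subst AE_distr_iff) (auto simp: borel_closed)
qed

lemma sets_lborel_sph:
  "sets (lborel \<Otimes>\<^sub>M (sph :: (real^'n) measure)) = sets (borel :: ((real^'n) \<times> (real^'n)) measure)"
proof -
  have "sets (lborel \<Otimes>\<^sub>M (sph :: (real^'n) measure)) = sets (borel \<Otimes>\<^sub>M (borel :: (real^'n) measure))"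
    by (intro sets_pair_measure_cong) auto
  also have "\<dots> = sets borel"
    by (rule arg_cong[where f=sets, OF borel_prod])
  finally show ?thesis .
qed

lemma domain_times_sphere_sets:
  "open (\<Omega> :: (real^'n) set) \<Longrightarrow> \<Omega> \<times> sphere 0 1 \<in> sets (lborel \<Otimes>\<^sub>M (sph :: (real^'n) measure))"
  by (intro pair_measureI) (auto simp: borel_open borel_closed)

lemma space_X_meas: "space (X_meas \<Omega>) = \<Omega> \<times> sphere (0::real^'n) 1"
  unfolding X_meas_def by (simp add: space_restrict_space space_pair_measure)

lemma sets_X_meas_iff:
  fixes \<Omega> :: "(real^'n) set"
  assumes "open \<Omega>"
  shows "A \<in> sets (X_meas \<Omega>) \<longleftrightarrow> A \<subseteq> \<Omega> \<times> sphere 0 1 \<and> A \<in> sets borel"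
  unfolding X_meas_def
  by (subst sets_restrict_space_iff) (use domain_times_sphere_sets[OF assms] sets_lborel_sph in auto)

lemma AE_X_meas_iff_AE_pair:
  fixes \<Omega> :: "(real^'n) set"
  assumes "open \<Omega>"
  shows "(AE z in X_meas \<Omega>. P z) \<longleftrightarrow> (AE z in lborel \<Otimes>\<^sub>M sph. z \<in> \<Omega> \<times> sphere 0 1 \<longrightarrow> P z)"
  unfolding X_meas_def using domain_times_sphere_sets[OF assms]
  by (simp add: AE_restrict_space_iff space_pair_measure)

lemma AE_pair_imp_AE_sph_lborel:
  assumes "AE z in lborel \<Otimes>\<^sub>M (sph :: (real^'n) measure). P z"
  shows "AE v in sph. AE x in (lborel :: (real^'n) measure). P (x, v)"
proof -
  have "AE z in distr (sph \<Otimes>\<^sub>M lborel) (lborel \<Otimes>\<^sub>M sph) (\<lambda>(v, x). (x, v)). P z"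
    using assms by (subst (asm) lborel_sph.distr_pair_swap)
  then have "AE z in sph \<Otimes>\<^sub>M (lborel :: (real^'n) measure). P (snd z, fst z)"
    by (auto dest: AE_distrD[OF measurable_pair_swap'] simp: case_prod_beta)
  then show ?thesis
    by (auto dest: sph_lborel.AE_pair)
qed

lemma AE_X_meas_sph_lborel:
  fixes \<Omega> :: "(real^'n) set"
  assumes "open \<Omega>" "AE z in X_meas \<Omega>. P z"
  shows "AE v in sph. AE x in lborel. x \<in> \<Omega> \<longrightarrow> P (x, v)"
proof -
  have "AE v in sph. AE x in lborel. (x, v) \<in> \<Omega> \<times> sphere 0 1 \<longrightarrow> P (x, v)"
    using assms by (intro AE_pair_imp_AE_sph_lborel) (simp add: AE_X_meas_iff_AE_pair)
  with AE_sph_in_sphere show ?thesis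
    by eventually_elim auto
qed

lemma AE_X_meas_lborel_sph:
  fixes \<Omega> :: "(real^'n) set"
  assumes "open \<Omega>" "AE z in X_meas \<Omega>. P z"
  shows "AE x in lborel. x \<in> \<Omega> \<longrightarrow> (AE v in sph. P (x, v))"
proof -
  have "AE x in lborel. AE v in sph. (x, v) \<in> \<Omega> \<times> sphere 0 1 \<longrightarrow> P (x, v)"
    using assms by (intro lborel_sph.AE_pair) (simp add: AE_X_meas_iff_AE_pair)
  then show ?thesis
  proof (rule eventually_mono)
    fix x assume "AE v in sph. (x, v) \<in> \<Omega> \<times> sphere 0 1 \<longrightarrow> P (x, v)"
    then show "x \<in> \<Omega> \<longrightarrow> (AE v in sph. P (x, v))"
      using AE_sph_in_sphere by (auto elim: eventually_elim2)
  qed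
qed

lemma AE_X_meas_if_AE_sph_lborel:
  fixes \<Omega> :: "(real^'n) set"
  assumes "open \<Omega>" and meas: "{z \<in> space (lborel \<Otimes>\<^sub>M sph). P z} \<in> sets (lborel \<Otimes>\<^sub>M sph)"
    and "AE v in sph. AE x in lborel. x \<in> \<Omega> \<longrightarrow> P (x, v)"
  shows "AE z in X_meas \<Omega>. P z"
proof -
  have [measurable]: "\<Omega> \<in> sets borel"
    using \<open>open \<Omega>\<close> by (rule borel_open)
  have meas': "{z \<in> space (lborel \<Otimes>\<^sub>M sph). fst z \<in> \<Omega> \<longrightarrow> P z} \<in> sets (lborel \<Otimes>\<^sub>M sph)"
    using meas by measurable
  have "AE x in lborel. AE v in sph. x \<in> \<Omega> \<longrightarrow> P (x, v)"
    using lborel_sph.AE_commute[of "\<lambda>x v. x \<in> \<Omega> \<longrightarrow> P (x, v)"] meas' assms(3) by simp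
  then have "AE z in lborel \<Otimes>\<^sub>M sph. fst z \<in> \<Omega> \<longrightarrow> P z"
    by (intro lborel_sph.AE_pair_measure[OF meas']) simp
  then show ?thesis
    using assms(1) by (simp add: AE_X_meas_iff_AE_pair) (auto elim: eventually_mono)
qed

lemma AE_Om_meas_imp_AE_lborel:
  fixes \<Omega> :: "(real^'n) set"
  assumes "open \<Omega>" "AE x in Om_meas \<Omega>. P x"
  shows "AE x in lborel. x \<in> \<Omega> \<longrightarrow> P x"
  using assms unfolding Om_meas_def by (simp add: AE_restrict_space_iff borel_open)

lemma AE_lborel_line_avoids_null:
  fixes N :: "'a::euclidean_space set" and v :: 'a
  assumes N: "N \<in> sets lborel" "emeasure lborel N = 0"
  shows "AE x in lborel. AE s in (lborel :: real measure). x - s *\<^sub>R v \<notin> N"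
proof -
  let ?f = "\<lambda>z::'a \<times> real. indicator N (fst z - snd z *\<^sub>R v) :: ennreal"
  have [measurable]: "N \<in> sets borel"
    using N by simp
  have f_meas [measurable]: "?f \<in> borel_measurable (lborel \<Otimes>\<^sub>M lborel)"
    by measurable
  have translate: "(\<integral>\<^sup>+x. indicator N (x - s *\<^sub>R v) \<partial>lborel) = 0" for s
  proof -
    have "(\<integral>\<^sup>+x. indicator N (x - s *\<^sub>R v) \<partial>lborel) =
        (\<integral>\<^sup>+y. indicator N y \<partial>distr lborel borel ((+) (- (s *\<^sub>R v))))"
      by (subst nn_integral_distr) auto
    also have "\<dots> = 0"
      using N by (simp only: lborel_distr_plus) simp
    finally show ?thesis .
  qed
  have "(\<integral>\<^sup>+x. (\<integral>\<^sup>+s. ?f (x, s) \<partial>lborel) \<partial>lborel) = (\<integral>\<^sup>+s. (\<integral>\<^sup>+x. ?f (x, s) \<partial>lborel) \<partial>lborel)"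
    using lborel_pair.Fubini[OF f_meas] by simp
  also have "\<dots> = 0"
    by (simp add: translate)
  finally have "AE x in lborel. (\<integral>\<^sup>+s. ?f (x, s) \<partial>lborel) = 0"
    by (subst (asm) nn_integral_0_iff_AE) (auto intro!: lborel.borel_measurable_nn_integral_fst f_meas)
  then show ?thesis
  proof (rule eventually_mono)
    fix x
    assume "(\<integral>\<^sup>+s. ?f (x, s) \<partial>lborel) = 0"
    then have "AE s in lborel. ?f (x, s) = 0"
      by (subst (asm) nn_integral_0_iff_AE) auto
    then show "AE s in lborel. x - s *\<^sub>R v \<notin> N"
      by (rule eventually_mono) (simp add: indicator_def split: if_splits)
  qed
qed

section \<open>Defining functions of smooth convex domains\<close>

lemma defining_fun_SOME:
  assumes "smooth_boundary \<Omega>"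
  shows "defining_fun \<Omega> (SOME \<rho>. defining_fun \<Omega> \<rho>)"
  using assms unfolding smooth_boundary_def by (rule someI_ex)

lemma smooth_fun_C1:
  assumes "smooth_fun \<rho>"
  obtains \<rho>' where "\<And>x. (\<rho> has_derivative \<rho>' x) (at x)" "\<And>h. continuous_on UNIV (\<lambda>x. \<rho>' x h)"
proof -
  have "Ck (Suc 0) \<rho>"
    using assms unfolding smooth_fun_def by blast
  then show ?thesis
    using that by auto
qed

lemma smooth_fun_has_derivative:
  "smooth_fun \<rho> \<Longrightarrow> (\<rho> has_derivative frechet_derivative \<rho> (at x)) (at x)"
  by (metis smooth_fun_C1 frechet_derivative_at)

lemma linear_eq_inner_gradient:
  fixes d :: "real^'n \<Rightarrow> real"
  assumes "linear d"
  shows "d v = (\<chi> i. d (axis i 1)) \<bullet> v"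
proof -
  have "d v = d (\<Sum>i\<in>UNIV. v $ i *\<^sub>R axis i 1)"
    by (metis (no_types) basis_expansion scalar_mult_eq_scaleR)
  also have "\<dots> = (\<Sum>i\<in>UNIV. v $ i * d (axis i 1))"
    using assms by (simp add: linear_sum linear_scale)
  finally show ?thesis
    by (simp add: inner_vec_def mult.commute)
qed

text \<open>Otherwise \<open>\<rho>\<close>, which vanishes at \<open>p\<close>, would be positive at points of the segment from
  \<open>p\<close> to \<open>y\<close>, and these lie in \<open>\<Omega>\<close> by convexity.\<close>

lemma defining_fun_derivative_nonpos:
  fixes \<Omega> :: "(real^'n) set"
  assumes "open \<Omega>" "convex \<Omega>" and \<rho>: "defining_fun \<Omega> \<rho>"
    and p: "p \<in> frontier \<Omega>" and y: "y \<in> \<Omega>"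
  shows "frechet_derivative \<rho> (at p) (y - p) \<le> 0"
proof (rule ccontr)
  define d where "d = frechet_derivative \<rho> (at p)"
  assume "\<not> frechet_derivative \<rho> (at p) (y - p) \<le> 0"
  then have pos: "0 < d (y - p)"
    unfolding d_def by simp
  have d: "(\<rho> has_derivative d) (at p)"
    using \<rho> unfolding d_def defining_fun_def by (blast intro: smooth_fun_has_derivative)
  have "((\<lambda>t. p + t *\<^sub>R (y - p)) has_derivative (\<lambda>t. t *\<^sub>R (y - p))) (at 0)"
    by (auto intro!: derivative_eq_intros)
  then have "((\<rho> \<circ> (\<lambda>t. p + t *\<^sub>R (y - p))) has_derivative (d \<circ> (\<lambda>t. t *\<^sub>R (y - p)))) (at 0)"
    using d by (intro diff_chain_at) auto
  moreover have "d \<circ> (\<lambda>t. t *\<^sub>R (y - p)) = (*) (d (y - p))"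
    using has_derivative_linear[OF d] by (auto simp: linear_scale)
  ultimately have "((\<lambda>t. \<rho> (p + t *\<^sub>R (y - p))) has_field_derivative d (y - p)) (at 0)"
    by (simp add: has_field_derivative_def o_def)
  from DERIV_pos_inc_right[OF this pos] obtain \<delta> where \<delta>: "\<delta> > 0"
    "\<And>h. 0 < h \<Longrightarrow> h < \<delta> \<Longrightarrow> \<rho> p < \<rho> (p + h *\<^sub>R (y - p))"
    by auto
  define h where "h = min (\<delta> / 2) 1"
  have "p - h *\<^sub>R (p - y) \<in> interior \<Omega>"
    using \<delta>(1) p \<open>open \<Omega>\<close> y unfolding h_def
    by (intro mem_interior_closure_convex_shrink[OF \<open>convex \<Omega>\<close>])
      (auto simp: interior_open frontier_def)
  then have "\<rho> (p + h *\<^sub>R (y - p)) < 0"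
    using \<rho> \<open>open \<Omega>\<close> unfolding defining_fun_def by (simp add: interior_open algebra_simps)
  moreover have "\<rho> p = 0"
    using \<rho> p unfolding defining_fun_def by blast
  ultimately show False
    using \<delta> unfolding h_def by (smt (verit) field_sum_of_halves)
qed

lemma defining_fun_derivative_neg:
  fixes \<Omega> :: "(real^'n) set"
  assumes "open \<Omega>" "convex \<Omega>" and \<rho>: "defining_fun \<Omega> \<rho>"
    and p: "p \<in> frontier \<Omega>" and x: "x \<in> \<Omega>"
  shows "frechet_derivative \<rho> (at p) (x - p) < 0"
proof -
  define d where "d = frechet_derivative \<rho> (at p)"
  have lin: "linear d"
    using \<rho> unfolding d_def defining_fun_def by (blast intro: smooth_fun_has_derivative has_derivative_linear)
  obtain w where w: "0 < d w"
  proof -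
    obtain w0 where "d w0 \<noteq> 0"
      using \<rho> p unfolding d_def defining_fun_def by fastforce
    then show ?thesis
      using that[of w0] that[of "- w0"] linear_neg[OF lin, of w0] by (cases "d w0 > 0") auto
  qed
  then have "w \<noteq> 0"
    using lin linear_0 by force
  obtain e where e: "e > 0" "ball x e \<subseteq> \<Omega>"
    using \<open>open \<Omega>\<close> x open_contains_ball by blast
  define y where "y = x + (e / (2 * norm w)) *\<^sub>R w"
  have "y \<in> \<Omega>"
    using e \<open>w \<noteq> 0\<close> by (intro subsetD[OF e(2)]) (simp add: y_def dist_norm)
  then have "d (y - p) \<le> 0"
    unfolding d_def using defining_fun_derivative_nonpos[OF assms(1-4)] by blast
  moreover have "d (y - p) = d (x - p) + (e / (2 * norm w)) * d w"
  proof -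
    have "y - p = (x - p) + (e / (2 * norm w)) *\<^sub>R w"
      unfolding y_def by simp
    then show ?thesis
      by (simp only: linear_add[OF lin] linear_scale[OF lin] real_scaleR_def)
  qed
  moreover have "0 < (e / (2 * norm w)) * d w"
    using e w \<open>w \<noteq> 0\<close> by simp
  ultimately show ?thesis
    unfolding d_def by linarith
qed

lemma Gamma_minus_sets:
  fixes \<Omega> :: "(real^'n) set"
  assumes "smooth_boundary \<Omega>"
  shows "Gamma_minus \<Omega> \<in> sets (borel \<Otimes>\<^sub>M borel)"
proof -
  define \<rho> where "\<rho> = (SOME \<rho>. defining_fun \<Omega> \<rho>)"
  have "smooth_fun \<rho>"
    using defining_fun_SOME[OF assms] unfolding \<rho>_def defining_fun_def by blast
  then obtain \<rho>' where \<rho>': "\<And>y. (\<rho> has_derivative \<rho>' y) (at y)"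
    and cont: "\<And>h. continuous_on UNIV (\<lambda>y. \<rho>' y h)"
    using smooth_fun_C1 by metis
  define gr where "gr y = (\<chi> i. \<rho>' y (axis i 1))" for y
  have "continuous_on UNIV gr"
    unfolding gr_def by (intro continuous_on_vec_lambda cont)
  then have [measurable]: "gr \<in> borel_measurable borel"
    by (rule borel_measurable_continuous_onI)
  have "outer_normal \<Omega> = (\<lambda>y. gr y /\<^sub>R norm (gr y))"
    using frechet_derivative_at[OF \<rho>']
    by (auto simp: fun_eq_iff outer_normal_def Let_def gr_def \<rho>_def[symmetric])
  then have [measurable]: "outer_normal \<Omega> \<in> borel_measurable borel"
    by simp
  have [measurable]: "frontier \<Omega> \<in> sets borel" "sphere (0::real^'n) 1 \<in> sets borel"
    by (simp_all add: borel_closed)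
  have "Gamma_minus \<Omega> = {z \<in> space (borel \<Otimes>\<^sub>M borel). fst z \<in> frontier \<Omega> \<and> snd z \<in> sphere 0 1 \<and>
      0 < - (outer_normal \<Omega> (fst z) \<bullet> snd z)}"
    unfolding Gamma_minus_def by (auto simp: space_pair_measure)
  also have "\<dots> \<in> sets (borel \<Otimes>\<^sub>M borel)"
    by measurable
  finally show ?thesis .
qed

section \<open>The backward exit time\<close>

abbreviation exit_point :: "(real^'n) set \<Rightarrow> real^'n \<Rightarrow> real^'n \<Rightarrow> real^'n" where
  "exit_point \<Omega> x v \<equiv> x - tau \<Omega> x v *\<^sub>R v"

locale bounded_convex_domain =
  fixes \<Omega> :: "(real^'n) set"
  assumes open_dom: "open \<Omega>" and convex_dom: "convex \<Omega>" and bounded_dom: "bounded \<Omega>"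
begin

lemma backward_segment_in_dom:
  assumes x: "x \<in> \<Omega>" and t: "x - t *\<^sub>R v \<in> \<Omega>" and s: "0 \<le> s" "s \<le> t"
  shows "x - s *\<^sub>R v \<in> \<Omega>"
proof (cases "t = 0")
  case True
  then show ?thesis
    using s x by simp
next
  case False
  then have "t > 0"
    using s by simp
  then have "x - s *\<^sub>R v = (1 - s / t) *\<^sub>R x + (s / t) *\<^sub>R (x - t *\<^sub>R v)"
    by (simp add: algebra_simps)
  also have "\<dots> \<in> \<Omega>"
    using \<open>t > 0\<close> s by (intro convexD[OF convex_dom x t]) (auto simp: field_simps)
  finally show ?thesis .
qed

lemma backward_time_le_diameter:
  assumes "x \<in> \<Omega>" "norm v = 1" "x - t *\<^sub>R v \<in> \<Omega>"
  shows "\<bar>t\<bar> \<le> diameter \<Omega>"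
  using diameter_bounded_bound[OF bounded_dom assms(1,3)] assms(2) by (simp add: dist_norm)

lemma tau_eq_Sup:
  assumes "x \<in> \<Omega>"
  shows "tau \<Omega> x v = Sup {t. 0 \<le> t \<and> x - t *\<^sub>R v \<in> \<Omega>}"
proof -
  have "{t. 0 \<le> t \<and> (\<forall>s\<in>{0..t}. x - s *\<^sub>R v \<in> \<Omega>)} = {t. 0 \<le> t \<and> x - t *\<^sub>R v \<in> \<Omega>}"
    using backward_segment_in_dom[OF assms] by auto
  then show ?thesis
    unfolding tau_def by simp
qed

lemma less_tau_iff:
  assumes x: "x \<in> \<Omega>" and v: "norm v = 1" and a: "0 \<le> a"
  shows "a < tau \<Omega> x v \<longleftrightarrow> x - a *\<^sub>R v \<in> \<Omega>"
proof -
  define S where "S = {t. 0 \<le> t \<and> x - t *\<^sub>R v \<in> \<Omega>}"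
  have tau: "tau \<Omega> x v = Sup S"
    unfolding S_def by (rule tau_eq_Sup[OF x])
  have bdd: "bdd_above S"
    unfolding S_def bdd_above_def using backward_time_le_diameter[OF x v] by force
  have "0 \<in> S"
    unfolding S_def using x by simp
  show ?thesis
  proof
    assume "a < tau \<Omega> x v"
    then obtain t where "t \<in> S" "a < t"
      unfolding tau using less_cSup_iff[OF _ bdd] \<open>0 \<in> S\<close> by blast
    then show "x - a *\<^sub>R v \<in> \<Omega>"
      unfolding S_def using backward_segment_in_dom[OF x _ a] by auto
  next
    assume "x - a *\<^sub>R v \<in> \<Omega>"
    then obtain e where e: "e > 0" "ball (x - a *\<^sub>R v) e \<subseteq> \<Omega>"
      using open_dom open_contains_ball by blast
    have "x - (a + e / 2) *\<^sub>R v \<in> ball (x - a *\<^sub>R v) e"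
      using e v by (simp add: dist_norm algebra_simps)
    then have "a + e / 2 \<in> S"
      unfolding S_def using e a by auto
    then have "a + e / 2 \<le> Sup S"
      by (rule cSup_upper[OF _ bdd])
    then show "a < tau \<Omega> x v"
      using e tau by simp
  qed
qed

lemma tau_pos: "x \<in> \<Omega> \<Longrightarrow> norm v = 1 \<Longrightarrow> 0 < tau \<Omega> x v"
  using less_tau_iff[of x v 0] by simp

lemma tau_le_diameter:
  assumes x: "x \<in> \<Omega>" and v: "norm v = 1"
  shows "tau \<Omega> x v \<le> diameter \<Omega>"
proof (rule ccontr)
  define a where "a = (diameter \<Omega> + tau \<Omega> x v) / 2"
  assume "\<not> tau \<Omega> x v \<le> diameter \<Omega>"
  then have "0 \<le> a" "a < tau \<Omega> x v" "diameter \<Omega> < a"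
    using diameter_ge_0[OF bounded_dom] unfolding a_def by auto
  then show False
    using less_tau_iff[OF x v] backward_time_le_diameter[OF x v] by fastforce
qed

lemma exit_point_in_frontier:
  assumes x: "x \<in> \<Omega>" and v: "norm v = 1"
  shows "exit_point \<Omega> x v \<in> frontier \<Omega>"
proof -
  let ?L = "tau \<Omega> x v"
  have "exit_point \<Omega> x v \<notin> \<Omega>"
    using less_tau_iff[OF x v, of ?L] tau_pos[OF x v] by simp
  moreover have "exit_point \<Omega> x v \<in> closure \<Omega>"
    unfolding closure_approachable
  proof (intro allI impI)
    fix e :: real
    assume e: "e > 0"
    define t where "t = max 0 (?L - e / 2)"
    have "dist (x - t *\<^sub>R v) (exit_point \<Omega> x v) = \<bar>?L - t\<bar>"
      using v by (simp add: dist_norm algebra_simps flip: scaleR_diff_left)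
    also have "\<dots> < e"
      using e tau_pos[OF x v] unfolding t_def by (auto simp: abs_if)
    finally have "dist (x - t *\<^sub>R v) (exit_point \<Omega> x v) < e" .
    moreover have "x - t *\<^sub>R v \<in> \<Omega>"
      using less_tau_iff[OF x v, of t] tau_pos[OF x v] e unfolding t_def by simp
    ultimately show "\<exists>y\<in>\<Omega>. dist y (exit_point \<Omega> x v) < e"
      by blast
  qed
  ultimately show ?thesis
    using open_dom by (simp add: frontier_def interior_open)
qed

lemma tau_shift:
  assumes x: "x \<in> \<Omega>" and v: "norm v = 1" and s: "0 \<le> s" "s < tau \<Omega> x v"
  shows "tau \<Omega> (x - s *\<^sub>R v) v = tau \<Omega> x v - s"
proof -
  have y: "x - s *\<^sub>R v \<in> \<Omega>"
    using less_tau_iff[OF x v] s by blast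
  have less_iff: "a < tau \<Omega> (x - s *\<^sub>R v) v \<longleftrightarrow> a < tau \<Omega> x v - s" if "0 \<le> a" for a
  proof -
    have "a < tau \<Omega> (x - s *\<^sub>R v) v \<longleftrightarrow> x - (s + a) *\<^sub>R v \<in> \<Omega>"
      using less_tau_iff[OF y v that] by (simp add: algebra_simps)
    also have "\<dots> \<longleftrightarrow> s + a < tau \<Omega> x v"
      using less_tau_iff[OF x v, of "s + a"] that s by simp
    finally show ?thesis
      by arith
  qed
  show ?thesis
    using less_iff[of "tau \<Omega> x v - s"] less_iff[of "tau \<Omega> (x - s *\<^sub>R v) v"] s tau_pos[OF y v]
    by linarith
qed

lemma exit_point_shift:
  assumes "x \<in> \<Omega>" "norm v = 1" "0 \<le> s" "s < tau \<Omega> x v"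
  shows "exit_point \<Omega> (x - s *\<^sub>R v) v = exit_point \<Omega> x v"
  by (simp add: tau_shift[OF assms] scaleR_diff_left)

lemma exit_point_in_Gamma_minus:
  assumes smooth: "smooth_boundary \<Omega>" and x: "x \<in> \<Omega>" and v: "norm v = 1"
  shows "(exit_point \<Omega> x v, v) \<in> Gamma_minus \<Omega>"
proof -
  define \<rho> where "\<rho> = (SOME \<rho>. defining_fun \<Omega> \<rho>)"
  define p where "p = exit_point \<Omega> x v"
  define d where "d = frechet_derivative \<rho> (at p)"
  define gr where "gr = (\<chi> i. d (axis i 1))"
  have \<rho>: "defining_fun \<Omega> \<rho>"
    unfolding \<rho>_def by (rule defining_fun_SOME[OF smooth])
  have p: "p \<in> frontier \<Omega>"
    unfolding p_def by (rule exit_point_in_frontier[OF x v])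
  have lin: "linear d"
    using \<rho> unfolding d_def defining_fun_def by (blast intro: smooth_fun_has_derivative has_derivative_linear)
  have "d (tau \<Omega> x v *\<^sub>R v) < 0"
    using defining_fun_derivative_neg[OF open_dom convex_dom \<rho> p x] unfolding d_def p_def by simp
  then have "gr \<bullet> v < 0"
    using tau_pos[OF x v] linear_eq_inner_gradient[OF lin, of v]
    by (simp add: linear_scale[OF lin] mult_less_0_iff gr_def)
  then have "gr \<noteq> 0"
    by auto
  have "outer_normal \<Omega> p = gr /\<^sub>R norm gr"
    unfolding outer_normal_def Let_def gr_def d_def \<rho>_def ..
  then have "outer_normal \<Omega> p \<bullet> v = (gr \<bullet> v) / norm gr"
    by (simp add: divide_inverse_commute)
  also have "\<dots> < 0"
    using \<open>gr \<bullet> v < 0\<close> \<open>gr \<noteq> 0\<close> by (simp add: divide_neg_pos)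
  finally show ?thesis
    using p v unfolding Gamma_minus_def p_def by simp
qed

lemma tau_measurable: "(\<lambda>z. tau \<Omega> (fst z) (snd z)) \<in> borel_measurable (X_meas \<Omega>)"
  unfolding borel_measurable_iff_greater
proof
  fix a :: real
  have "{w \<in> space (X_meas \<Omega>). a < tau \<Omega> (fst w) (snd w)} =
      (\<Omega> \<times> sphere 0 1) \<inter> {w. a < 0 \<or> fst w - a *\<^sub>R snd w \<in> \<Omega>}"
  proof -
    have "a < tau \<Omega> x v \<longleftrightarrow> a < 0 \<or> x - a *\<^sub>R v \<in> \<Omega>" if "x \<in> \<Omega>" "v \<in> sphere 0 1" for x v
      using that less_tau_iff[of x v a] tau_pos[of x v] by (cases "a < 0") auto
    then show ?thesis
      unfolding space_X_meas by auto
  qed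
  also have "\<dots> \<in> sets (X_meas \<Omega>)"
  proof -
    have "open ((\<lambda>w::(real^'n) \<times> (real^'n). fst w - a *\<^sub>R snd w) -` \<Omega>)"
      by (intro continuous_open_vimage open_dom continuous_intros)
    then have "{w::(real^'n) \<times> (real^'n). a < 0 \<or> fst w - a *\<^sub>R snd w \<in> \<Omega>} \<in> sets borel"
      by (cases "a < 0") (auto simp: vimage_def dest: borel_open)
    moreover have "\<Omega> \<times> sphere 0 1 \<in> sets (borel :: ((real^'n) \<times> (real^'n)) measure)"
      using domain_times_sphere_sets[OF open_dom] sets_lborel_sph by auto
    ultimately show ?thesis
      unfolding sets_X_meas_iff[OF open_dom] by blast
  qed
  finally show "{w \<in> space (X_meas \<Omega>). a < tau \<Omega> (fst w) (snd w)} \<in> sets (X_meas \<Omega>)" .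
qed

lemma exit_map_measurable:
  "(\<lambda>(x, v). (exit_point \<Omega> x v, v)) \<in> measurable (X_meas \<Omega>) (borel \<Otimes>\<^sub>M borel)"
proof -
  note [measurable] = tau_measurable
  have [measurable]: "fst \<in> borel_measurable (X_meas \<Omega>)" "snd \<in> borel_measurable (X_meas \<Omega>)"
    unfolding X_meas_def by (intro measurable_restrict_space1; simp)+
  have "(\<lambda>z. (exit_point \<Omega> (fst z) (snd z), snd z)) \<in> measurable (X_meas \<Omega>) (borel \<Otimes>\<^sub>M borel)"
    by measurable
  then show ?thesis
    by (simp add: case_prod_beta')
qed

lemma AE_exit_point_ge:
  assumes smooth: "smooth_boundary \<Omega>" and g: "AE w in Gamma_meas \<Omega>. c \<le> (\<lambda>(x, v). g x v) w"
  shows "AE z in X_meas \<Omega>. c \<le> g (exit_point \<Omega> (fst z) (snd z)) (snd z)"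
proof -
  have "AE w in distr (X_meas \<Omega>) (borel \<Otimes>\<^sub>M borel) (\<lambda>(x, v). (exit_point \<Omega> x v, v)).
      w \<in> Gamma_minus \<Omega> \<longrightarrow> c \<le> (\<lambda>(x, v). g x v) w"
    using g unfolding Gamma_meas_def
    by (subst (asm) AE_restrict_space_iff) (auto simp: Gamma_minus_sets[OF smooth] space_pair_measure)
  then have "AE z in X_meas \<Omega>. (exit_point \<Omega> (fst z) (snd z), snd z) \<in> Gamma_minus \<Omega> \<longrightarrow>
      c \<le> g (exit_point \<Omega> (fst z) (snd z)) (snd z)"
    by (auto dest: AE_distrD[OF exit_map_measurable] simp: case_prod_beta)
  moreover have "AE z in X_meas \<Omega>. (exit_point \<Omega> (fst z) (snd z), snd z) \<in> Gamma_minus \<Omega>"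
    by (rule AE_I2) (auto simp: space_X_meas intro!: exit_point_in_Gamma_minus[OF smooth])
  ultimately show ?thesis
    by eventually_elim auto
qed

end

section \<open>A Gronwall inequality\<close>

lemma set_integral_shift_Icc:
  fixes f :: "real \<Rightarrow> real"
  shows "(LINT \<sigma>:{0..L - s}|lborel. f (s + \<sigma>)) = (LINT t:{s..L}|lborel. f t)"
proof -
  have "(LINT t:{s..L}|lborel. f t) = (\<integral>t. indicator {s..L} t *\<^sub>R f t \<partial>lborel)"
    unfolding set_lebesgue_integral_def ..
  also have "\<dots> = \<bar>1\<bar> *\<^sub>R (\<integral>x. indicator {s..L} (s + 1 * x) *\<^sub>R f (s + 1 * x) \<partial>lborel)"
    by (rule lborel_integral_real_affine[where c=1 and t=s]) simp
  also have "\<dots> = (\<integral>x. indicator {0..L - s} x *\<^sub>R f (s + x) \<partial>lborel)"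
    by (simp only: abs_one scaleR_one mult_1)
      (intro Bochner_Integration.integral_cong refl, auto simp: indicator_def)
  finally show ?thesis
    unfolding set_lebesgue_integral_def by simp
qed

lemma Gronwall_integral_lower:
  fixes \<psi> :: "real \<Rightarrow> real"
  assumes L: "0 \<le> L" and M: "0 < M" and cont: "continuous_on {0..L} \<psi>"
    and bound: "\<And>s. s \<in> {0..L} \<Longrightarrow> \<psi> s \<le> C - M * integral {s..L} \<psi>"
  shows "C * exp (- M * L) \<le> C - M * integral {0..L} \<psi>"
proof -
  define \<Phi> where "\<Phi> = (\<lambda>s. integral {s..L} \<psi>)"
  define D where "D s = exp (- M * s) * (\<Phi> s - C / M)" for s
  have "D 0 \<le> D L"
  proof (rule DERIV_nonneg_imp_increasing_open[OF L])
    show "continuous_on {0..L} D"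
      unfolding D_def \<Phi>_def
      by (intro continuous_intros indefinite_integral_continuous_1' integrable_continuous_real cont)
    fix s
    assume s: "0 < s" "s < L"
    have "(\<Phi> has_real_derivative - \<psi> s) (at s)"
      using integral_has_real_derivative'[OF cont, of s] s by (simp add: \<Phi>_def at_within_Icc_at)
    then have "(D has_real_derivative exp (- M * s) * (C - M * \<Phi> s - \<psi> s)) (at s)"
      unfolding D_def using M by (auto intro!: derivative_eq_intros simp: field_simps)
    moreover have "0 \<le> exp (- M * s) * (C - M * \<Phi> s - \<psi> s)"
      using bound[of s] s unfolding \<Phi>_def by simp
    ultimately show "\<exists>y. (D has_real_derivative y) (at s) \<and> 0 \<le> y"
      by blast
  qed
  then have "\<Phi> 0 - C / M \<le> - (C * exp (- M * L) / M)"
    by (simp add: D_def \<Phi>_def mult.commute)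
  then have "M * (\<Phi> 0 - C / M) \<le> M * (- (C * exp (- M * L) / M))"
    using M by (intro mult_left_mono) auto
  then have "M * \<Phi> 0 - C \<le> - (C * exp (- M * L))"
    using M by (simp add: right_diff_distrib)
  then show ?thesis
    by (simp add: \<Phi>_def)
qed

text \<open>Here \<open>\<psi> s = G + \<integral>\<^sub>s\<^sup>L F\<close> is only absolutely continuous, so \<open>\<psi>' \<ge> - M \<psi>\<close> is used in
  integrated form; integrating once more gives the \<open>C\<^sup>1\<close> function of the previous lemma.\<close>

lemma Gronwall_set_integral_lower:
  fixes F :: "real \<Rightarrow> real"
  assumes L: "0 \<le> L" and M: "0 < M" and G: "0 \<le> G"
    and F: "AE s in lborel. s \<in> {0..L} \<longrightarrow> - M * (G + (LINT t:{s..L}|lborel. F t)) \<le> F s"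
  shows "G * exp (- M * L) \<le> G + (LINT t:{0..L}|lborel. F t)"
proof (cases "set_integrable lborel {0..L} F")
  case False
  then have "(LINT t:{0..L}|lborel. F t) = 0"
    by (simp add: set_lebesgue_integral_def set_integrable_def not_integrable_integral_eq)
  then show ?thesis
    using M L G by (simp add: mult_left_le)
next
  case True
  have F_int: "set_integrable lborel {a..b} F" if "0 \<le> a" "b \<le> L" for a b
    using that by (intro set_integrable_subset[OF True]) auto
  have F_HK: "(LINT t:{a..b}|lborel. F t) = integral {a..b} F" if "0 \<le> a" "b \<le> L" for a b
    by (rule set_borel_integral_eq_integral(2)[OF F_int[OF that]])
  define \<psi> where "\<psi> s = G + integral {s..L} F" for s
  have cont: "continuous_on {0..L} \<psi>"
    unfolding \<psi>_def using set_borel_integral_eq_integral(1)[OF True]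
    by (intro continuous_intros indefinite_integral_continuous_1')
  define C where "C = \<psi> 0 + M * integral {0..L} \<psi>"
  have bound: "\<psi> s \<le> C - M * integral {s..L} \<psi>" if s: "s \<in> {0..L}" for s
  proof -
    have cont_s: "continuous_on {0..s} \<psi>"
      using s by (intro continuous_on_subset[OF cont]) auto
    have "(LINT t:{0..s}|lborel. - M * \<psi> t) \<le> (LINT t:{0..s}|lborel. F t)"
    proof (rule set_integral_mono_AE)
      show "set_integrable lborel {0..s} (\<lambda>t. - M * \<psi> t)"
        using borel_integrable_atLeastAtMost'[OF cont_s] by (rule set_integrable_mult_right)
      show "set_integrable lborel {0..s} F"
        using s by (intro F_int) auto
      show "AE t \<in> {0..s} in lborel. - M * \<psi> t \<le> F t"
        using F by eventually_elim (use s in \<open>auto simp: \<psi>_def F_HK\<close>)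
    qed
    moreover have "(LINT t:{0..s}|lborel. - M * \<psi> t) = - M * integral {0..s} \<psi>"
      using set_borel_integral_eq_integral(2)[OF borel_integrable_atLeastAtMost'[OF cont_s]]
      by (subst set_integral_mult_right) simp
    ultimately have "- M * integral {0..s} \<psi> \<le> integral {0..s} F"
      using s by (simp add: F_HK)
    moreover have "integral {0..s} F = \<psi> 0 - \<psi> s"
      using s Henstock_Kurzweil_Integration.integral_combine[of 0 s L F]
        set_borel_integral_eq_integral(1)[OF True] by (simp add: \<psi>_def)
    moreover have "integral {0..s} \<psi> = integral {0..L} \<psi> - integral {s..L} \<psi>"
      using s Henstock_Kurzweil_Integration.integral_combine[of 0 s L \<psi>]
        integrable_continuous_real[OF cont] by simp
    ultimately show ?thesis
      unfolding C_def by (simp add: algebra_simps)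
  qed
  have "G * exp (- M * L) \<le> C * exp (- M * L)"
    using bound[of L] L by (simp add: \<psi>_def)
  also have "\<dots> \<le> \<psi> 0"
    using Gronwall_integral_lower[OF L M cont bound] by (simp add: C_def)
  also have "\<dots> = G + (LINT t:{0..L}|lborel. F t)"
    using L by (simp add: \<psi>_def F_HK)
  finally show ?thesis .
qed

section \<open>Mild solutions along characteristics\<close>

lemma ess_inf_pos_imp_AE_ge:
  assumes "Linf M f" "0 < ess_inf M f"
  obtains c where "0 < c" "AE x in M. c \<le> f x"
proof -
  let ?S = "{c. AE x in M. c \<le> f x}"
  obtain B where "AE x in M. \<bar>f x\<bar> \<le> B"
    using assms(1) unfolding Linf_def by blast
  then have "- B \<in> ?S"
    by (auto elim: eventually_mono)
  have "\<exists>c\<in>?S. 0 < c"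
  proof (cases "bdd_above ?S")
    case True
    then show ?thesis
      using assms(2) less_cSup_iff[of ?S 0] \<open>- B \<in> ?S\<close> unfolding ess_inf_def by blast
  next
    case False
    then show ?thesis
      unfolding bdd_above_def by (metis not_le order.strict_trans1 zero_le_one)
  qed
  then show ?thesis
    using that by blast
qed

lemma F_class_AE_bounds: "F_class M lo hi f \<Longrightarrow> AE x in M. 0 \<le> f x \<and> f x \<le> hi"
  unfolding F_class_def by (auto elim: eventually_mono)

lemma F_class_sph_sph_AE_nonneg:
  fixes \<Theta> :: "real^'n \<Rightarrow> real^'n \<Rightarrow> real"
  assumes "F_class (sph \<Otimes>\<^sub>M sph) lo hi (\<lambda>(v, v'). \<Theta> v v')"
  shows "AE v in sph. AE v' in sph. 0 \<le> \<Theta> v v'"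
proof -
  have "AE z in sph \<Otimes>\<^sub>M sph. 0 \<le> \<Theta> (fst z) (snd z)"
    using F_class_AE_bounds[OF assms] by (auto elim: eventually_mono simp: case_prod_beta)
  from sph_sph.AE_pair[OF this] show ?thesis
    by simp
qed

lemma transport_coefficients_AE_bounds:
  fixes \<Omega> :: "(real^'n) set"
  assumes "open \<Omega>"
    and ss: "(ss \<in> borel_measurable (Om_meas \<Omega>) \<and> (AE x in Om_meas \<Omega>. ss x = 0)) \<or>
      F_class (Om_meas \<Omega>) ss_lo ss_hi ss"
    and sa: "F_class (Om_meas \<Omega>) sa_lo sa_hi sa" and sb: "F_class (Om_meas \<Omega>) sb_lo sb_hi sb"
  shows "AE x in lborel. x \<in> \<Omega> \<longrightarrow>
    0 \<le> ss x \<and> ss x \<le> \<bar>ss_hi\<bar> \<and> sa x \<le> sa_hi \<and> 0 \<le> sb x \<and> sb x \<le> sb_hi"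
proof (rule AE_Om_meas_imp_AE_lborel[OF \<open>open \<Omega>\<close>])
  have "AE x in Om_meas \<Omega>. 0 \<le> ss x \<and> ss x \<le> \<bar>ss_hi\<bar>"
    using ss
  proof
    assume "F_class (Om_meas \<Omega>) ss_lo ss_hi ss"
    from F_class_AE_bounds[OF this] show ?thesis
      by (auto elim: eventually_mono)
  qed (auto elim: eventually_mono)
  then show "AE x in Om_meas \<Omega>.
      0 \<le> ss x \<and> ss x \<le> \<bar>ss_hi\<bar> \<and> sa x \<le> sa_hi \<and> 0 \<le> sb x \<and> sb x \<le> sb_hi"
    using F_class_AE_bounds[OF sa] F_class_AE_bounds[OF sb] by eventually_elim auto
qed

definition transport_source ::
  "(real^'n \<Rightarrow> real) \<Rightarrow> (real^'n \<Rightarrow> real) \<Rightarrow> (real^'n \<Rightarrow> real) \<Rightarrow> (real^'n \<Rightarrow> real^'n \<Rightarrow> real)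
    \<Rightarrow> (real^'n \<Rightarrow> real^'n \<Rightarrow> real) \<Rightarrow> real^'n \<Rightarrow> real^'n \<Rightarrow> real" where
  "transport_source sa ss sb \<Theta> u y v = ss y * Kop \<Theta> u y v - (sa y + ss y + sb y * avg u y) * u y v"

definition mild_equation_at ::
  "(real^'n) set \<Rightarrow> (real^'n \<Rightarrow> real^'n \<Rightarrow> real) \<Rightarrow> (real^'n \<Rightarrow> real^'n \<Rightarrow> real)
    \<Rightarrow> (real^'n \<Rightarrow> real^'n \<Rightarrow> real) \<Rightarrow> real^'n \<Rightarrow> real^'n \<Rightarrow> bool" where
  "mild_equation_at \<Omega> g F u x v \<longleftrightarrow>
     u x v = g (exit_point \<Omega> x v) v + (LINT s:{0..tau \<Omega> x v}|lborel. F (x - s *\<^sub>R v) v)"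

lemma Kop_nonneg:
  assumes "AE v' in sph. 0 \<le> \<Theta> v v'" "AE v' in sph. 0 \<le> u y v'"
  shows "0 \<le> Kop \<Theta> u y v"
  unfolding Kop_def by (rule integral_nonneg_AE) (use assms in eventually_elim, simp)

lemma avg_le:
  fixes u :: "real^'n \<Rightarrow> real^'n \<Rightarrow> real"
  assumes "AE v in sph. u y v \<le> B" "0 \<le> B"
  shows "avg u y \<le> B"
proof -
  have "avg u y \<le> (\<integral>v. B \<partial>(sph :: (real^'n) measure))"
    unfolding avg_def by (rule integral_mono_AE') (use assms in auto)
  then show ?thesis
    by (simp add: sph.prob_space[unfolded space_sph])
qed

lemma transport_source_lower_bound:
  assumes \<Theta>: "AE v' in sph. 0 \<le> \<Theta> v v'" and u: "AE v' in sph. 0 \<le> u y v' \<and> u y v' \<le> B"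
    and "0 \<le> B" "0 \<le> u y v" "0 \<le> ss y" "ss y \<le> ssh" "sa y \<le> sah" "0 \<le> sb y" "sb y \<le> sbh"
    and M: "sah + ssh + sbh * B \<le> M"
  shows "- M * u y v \<le> transport_source sa ss sb \<Theta> u y v"
proof -
  have "0 \<le> Kop \<Theta> u y v"
    using \<Theta> u by (intro Kop_nonneg) (auto elim: eventually_mono)
  then have "0 \<le> ss y * Kop \<Theta> u y v"
    using \<open>0 \<le> ss y\<close> by simp
  have "avg u y \<le> B"
    using u \<open>0 \<le> B\<close> by (intro avg_le) (auto elim: eventually_mono)
  then have "sb y * avg u y \<le> sb y * B"
    using \<open>0 \<le> sb y\<close> by (rule mult_left_mono)
  also have "\<dots> \<le> sbh * B"
    using \<open>sb y \<le> sbh\<close> \<open>0 \<le> B\<close> by (rule mult_right_mono)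
  finally have "(sa y + ss y + sb y * avg u y) * u y v \<le> M * u y v"
    using assms(4-) by (intro mult_right_mono) linarith+
  with \<open>0 \<le> ss y * Kop \<Theta> u y v\<close> show ?thesis
    unfolding transport_source_def by linarith
qed

lemma transport_source_lower_bound_AE:
  fixes \<Omega> :: "(real^'n) set"
  assumes "open \<Omega>"
    and \<Theta>: "AE v in sph. AE v' in sph. 0 \<le> \<Theta> v v'"
    and u: "AE z in X_meas \<Omega>. 0 \<le> u (fst z) (snd z) \<and> u (fst z) (snd z) \<le> B" and "0 \<le> B"
    and coeff: "AE x in lborel. x \<in> \<Omega> \<longrightarrow>
      0 \<le> ss x \<and> ss x \<le> ssh \<and> sa x \<le> sah \<and> 0 \<le> sb x \<and> sb x \<le> sbh"
    and M: "sah + ssh + sbh * B \<le> M"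
  shows "AE v in sph. AE x in lborel. x \<in> \<Omega> \<longrightarrow> - M * u x v \<le> transport_source sa ss sb \<Theta> u x v"
proof -
  have u_x: "AE x in lborel. x \<in> \<Omega> \<longrightarrow> (AE v' in sph. 0 \<le> u x v' \<and> u x v' \<le> B)"
    using AE_X_meas_lborel_sph[OF \<open>open \<Omega>\<close> u] by simp
  have u_v: "AE v in sph. AE x in lborel. x \<in> \<Omega> \<longrightarrow> 0 \<le> u x v \<and> u x v \<le> B"
    using AE_X_meas_sph_lborel[OF \<open>open \<Omega>\<close> u] by simp
  from \<Theta> u_v show ?thesis
  proof eventually_elim
    case (elim v)
    note \<Theta>_v = elim(1)
    from elim(2) u_x coeff show ?case
    proof eventually_elim
      case (elim x)
      then show ?case
        using \<Theta>_v \<open>0 \<le> B\<close> M transport_source_lower_bound[of \<Theta> v u x B ss ssh sa sah sb sbh M]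
        by blast
    qed
  qed
qed

context bounded_convex_domain
begin

lemma lower_bound_on_characteristic:
  assumes x: "x \<in> \<Omega>" and v: "norm v = 1" and M: "0 < M" and cg: "0 \<le> cg"
    and g_exit: "cg \<le> g (exit_point \<Omega> x v) v"
    and mild_x: "mild_equation_at \<Omega> g F u x v"
    and along: "AE s in lborel. 0 \<le> s \<and> s < tau \<Omega> x v \<longrightarrow>
      mild_equation_at \<Omega> g F u (x - s *\<^sub>R v) v \<and> - M * u (x - s *\<^sub>R v) v \<le> F (x - s *\<^sub>R v) v"
  shows "cg * exp (- M * tau \<Omega> x v) \<le> u x v"
proof -
  define L where "L = tau \<Omega> x v"
  define G where "G = g (exit_point \<Omega> x v) v"
  define \<phi> where "\<phi> t = F (x - t *\<^sub>R v) v" for t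
  have "0 < L"
    unfolding L_def by (rule tau_pos[OF x v])
  have "AE s in lborel. s \<in> {0..L} \<longrightarrow> - M * (G + (LINT t:{s..L}|lborel. \<phi> t)) \<le> \<phi> s"
    using along AE_lborel_singleton[of L]
  proof eventually_elim
    case (elim s)
    show ?case
    proof
      assume "s \<in> {0..L}"
      with elim(2) have s: "0 \<le> s" "s < tau \<Omega> x v"
        unfolding L_def by auto
      have "u (x - s *\<^sub>R v) v = G + (LINT \<sigma>:{0..L - s}|lborel. \<phi> (s + \<sigma>))"
        using elim(1) s unfolding mild_equation_at_def L_def G_def \<phi>_def
        by (simp add: tau_shift[OF x v s] exit_point_shift[OF x v s] algebra_simps)
      also have "\<dots> = G + (LINT t:{s..L}|lborel. \<phi> t)"
        by (simp add: set_integral_shift_Icc)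
      finally show "- M * (G + (LINT t:{s..L}|lborel. \<phi> t)) \<le> \<phi> s"
        using elim(1) s unfolding \<phi>_def by auto
    qed
  qed
  then have "G * exp (- M * L) \<le> G + (LINT t:{0..L}|lborel. \<phi> t)"
    using g_exit cg \<open>0 < L\<close> M by (intro Gronwall_set_integral_lower) (auto simp: G_def)
  moreover have "u x v = G + (LINT t:{0..L}|lborel. \<phi> t)"
    using mild_x unfolding mild_equation_at_def G_def L_def \<phi>_def by simp
  moreover have "cg * exp (- M * L) \<le> G * exp (- M * L)"
    using g_exit unfolding G_def by simp
  ultimately show ?thesis
    unfolding L_def by linarith
qed

lemma lower_bound_along_direction:
  assumes v: "norm v = 1" and M: "0 < M" and cg: "0 \<le> cg"
    and good: "AE x in lborel. x \<in> \<Omega> \<longrightarrow>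
      mild_equation_at \<Omega> g F u x v \<and> cg \<le> g (exit_point \<Omega> x v) v \<and> - M * u x v \<le> F x v"
  shows "AE x in lborel. x \<in> \<Omega> \<longrightarrow> cg * exp (- M * tau \<Omega> x v) \<le> u x v"
proof -
  define good_at where "good_at y \<longleftrightarrow>
    mild_equation_at \<Omega> g F u y v \<and> cg \<le> g (exit_point \<Omega> y v) v \<and> - M * u y v \<le> F y v" for y
  obtain N where N: "{y \<in> space lborel. \<not> (y \<in> \<Omega> \<longrightarrow> good_at y)} \<subseteq> N"
    "emeasure lborel N = 0" "N \<in> sets lborel"
    using good unfolding good_at_def[symmetric] by (rule AE_E)
  have good_N: "good_at y" if "y \<in> \<Omega>" "y \<notin> N" for y
    using N(1) that by auto
  show ?thesis
    using AE_lborel_line_avoids_null[OF N(3,2), of v] good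
  proof eventually_elim
    case (elim x)
    show ?case
    proof
      assume x: "x \<in> \<Omega>"
      have "AE s in lborel. 0 \<le> s \<and> s < tau \<Omega> x v \<longrightarrow> good_at (x - s *\<^sub>R v)"
        using elim(1) by eventually_elim (use good_N less_tau_iff[OF x v] in blast)
      then show "cg * exp (- M * tau \<Omega> x v) \<le> u x v"
        using elim(2) x
        by (intro lower_bound_on_characteristic[OF x v M cg]) (auto simp: good_at_def elim: eventually_mono)
    qed
  qed
qed

lemma mild_solution_lower_bound:
  assumes u_meas: "(\<lambda>(x, v). u x v) \<in> borel_measurable (lborel \<Otimes>\<^sub>M sph)"
    and mild: "AE z in X_meas \<Omega>. mild_equation_at \<Omega> g F u (fst z) (snd z)"
    and g_exit: "AE z in X_meas \<Omega>. cg \<le> g (exit_point \<Omega> (fst z) (snd z)) (snd z)"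
    and F: "AE v in sph. AE x in lborel. x \<in> \<Omega> \<longrightarrow> - M * u x v \<le> F x v"
    and M: "0 < M" and cg: "0 \<le> cg"
  shows "AE z in X_meas \<Omega>. cg * exp (- M * diameter \<Omega>) \<le> u (fst z) (snd z)"
proof -
  have [measurable]: "(\<lambda>z. u (fst z) (snd z)) \<in> borel_measurable (lborel \<Otimes>\<^sub>M sph)"
    using u_meas by (simp add: case_prod_beta')
  have "AE z in X_meas \<Omega>. mild_equation_at \<Omega> g F u (fst z) (snd z) \<and>
      cg \<le> g (exit_point \<Omega> (fst z) (snd z)) (snd z)"
    using mild g_exit by eventually_elim simp
  from AE_X_meas_sph_lborel[OF open_dom this]
  have "AE v in sph. AE x in lborel. x \<in> \<Omega> \<longrightarrow>
      mild_equation_at \<Omega> g F u x v \<and> cg \<le> g (exit_point \<Omega> x v) v"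
    by simp
  then have "AE v in sph. AE x in lborel. x \<in> \<Omega> \<longrightarrow> cg * exp (- M * diameter \<Omega>) \<le> u x v"
    using F AE_sph_in_sphere
  proof eventually_elim
    case (elim v)
    then have v: "norm v = 1"
      by simp
    have "AE x in lborel. x \<in> \<Omega> \<longrightarrow>
        mild_equation_at \<Omega> g F u x v \<and> cg \<le> g (exit_point \<Omega> x v) v \<and> - M * u x v \<le> F x v"
      using elim(1,2) by eventually_elim auto
    then have "AE x in lborel. x \<in> \<Omega> \<longrightarrow> cg * exp (- M * tau \<Omega> x v) \<le> u x v"
      by (rule lower_bound_along_direction[OF v M cg])
    then show ?case
    proof (rule eventually_mono, intro impI)
      fix x
      assume "x \<in> \<Omega> \<longrightarrow> cg * exp (- M * tau \<Omega> x v) \<le> u x v" "x \<in> \<Omega>"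
      moreover have "cg * exp (- M * diameter \<Omega>) \<le> cg * exp (- M * tau \<Omega> x v)"
        using tau_le_diameter[OF \<open>x \<in> \<Omega>\<close> v] M cg by (intro mult_left_mono) auto
      ultimately show "cg * exp (- M * diameter \<Omega>) \<le> u x v"
        by simp
    qed
  qed
  moreover have "{z \<in> space (lborel \<Otimes>\<^sub>M sph). cg * exp (- M * diameter \<Omega>) \<le> u (fst z) (snd z)}
      \<in> sets (lborel \<Otimes>\<^sub>M sph)"
    by measurable
  ultimately show ?thesis
    using AE_X_meas_if_AE_sph_lborel[OF open_dom, of "\<lambda>z. cg * exp (- M * diameter \<Omega>) \<le> u (fst z) (snd z)"]
    by simp
qed

end

theorem corollary2p3:
  fixes \<Omega> :: "(real^'n) set"
    and sa ss sb :: "real^'n \<Rightarrow> real"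
    and \<Theta> g u :: "real^'n \<Rightarrow> real^'n \<Rightarrow> real"
    and sa_lo sa_hi ss_lo ss_hi sb_lo sb_hi th_lo th_hi :: real
  assumes dim: "CARD('n) \<ge> 2"
    and dom: "bcs_domain \<Omega>"
    and ss: "(ss \<in> borel_measurable (Om_meas \<Omega>) \<and> (AE x in Om_meas \<Omega>. ss x = 0)) \<or> F_class (Om_meas \<Omega>) ss_lo ss_hi ss"
    and Theta_F: "F_class (sph \<Otimes>\<^sub>M sph) th_lo th_hi (\<lambda>(v, v'). \<Theta> v v')"
    and Theta_sym: "AE z in sph \<Otimes>\<^sub>M sph. \<Theta> (fst z) (snd z) = \<Theta> (snd z) (fst z)"
    and Theta_norm1: "AE v in sph. (\<integral>v'. \<Theta> v v' \<partial>sph) = 1"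
    and Theta_norm2: "AE v' in sph. (\<integral>v. \<Theta> v v' \<partial>sph) = 1"
    and sa: "F_class (Om_meas \<Omega>) sa_lo sa_hi sa"
    and sb: "F_class (Om_meas \<Omega>) sb_lo sb_hi sb"
    and g: "Linf (Gamma_meas \<Omega>) (\<lambda>(x, v). g x v)"
    and g_lo: "ess_inf (Gamma_meas \<Omega>) (\<lambda>(x, v). g x v) > 0"
    and g_hi: "if (AE x in Om_meas \<Omega>. ss x = 0)
               then ess_sup (Gamma_meas \<Omega>) (\<lambda>(x, v). g x v)
                      \<le> ess_inf (Om_meas \<Omega>) (\<lambda>x. sa x / sb x)
               else ess_sup (Gamma_meas \<Omega>) (\<lambda>(x, v). g x v)
                      \<le> max (ess_inf (Om_meas \<Omega>) (\<lambda>x. sa x / sb x))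
                             (2 * th_lo * ess_inf (Om_meas \<Omega>) (\<lambda>x. ss x / sb x))"
    and sol: "is_solution \<Omega> sa ss sb \<Theta> g u"
  shows "\<exists>c>0. AE z in X_meas \<Omega>. u (fst z) (snd z) \<ge> c"
proof -
  have smooth: "smooth_boundary \<Omega>"
    using dom unfolding bcs_domain_def by blast
  interpret bounded_convex_domain \<Omega>
    using dom unfolding bcs_domain_def by unfold_locales auto
  obtain B where "AE z in X_meas \<Omega>. 0 \<le> u (fst z) (snd z) \<and> u (fst z) (snd z) \<le> B"
    using sol unfolding is_solution_def by blast
  then have u_bdd: "AE z in X_meas \<Omega>. 0 \<le> u (fst z) (snd z) \<and> u (fst z) (snd z) \<le> max B 0"
    by (auto elim: eventually_mono)
  have u_meas: "(\<lambda>(x, v). u x v) \<in> borel_measurable (lborel \<Otimes>\<^sub>M sph)"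
    and mild: "AE z in X_meas \<Omega>. mild_equation_at \<Omega> g (transport_source sa ss sb \<Theta> u) u (fst z) (snd z)"
    using sol unfolding is_solution_def mild_equation_at_def transport_source_def Let_def by auto
  obtain cg where "0 < cg" and g_ge: "AE w in Gamma_meas \<Omega>. cg \<le> (\<lambda>(x, v). g x v) w"
    using ess_inf_pos_imp_AE_ge[OF g g_lo] by blast
  define M where "M = sa_hi + \<bar>ss_hi\<bar> + sb_hi * max B 0 + 1"
  have "0 < M"
    using sa sb unfolding M_def F_class_def by (smt (verit) mult_nonneg_nonneg)
  have "AE v in sph. AE x in lborel. x \<in> \<Omega> \<longrightarrow> - M * u x v \<le> transport_source sa ss sb \<Theta> u x v"
    by (rule transport_source_lower_bound_AE[OF open_dom F_class_sph_sph_AE_nonneg[OF Theta_F] u_bdd _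
          transport_coefficients_AE_bounds[OF open_dom ss sa sb]])
      (simp_all add: M_def)
  then have "AE z in X_meas \<Omega>. cg * exp (- M * diameter \<Omega>) \<le> u (fst z) (snd z)"
    using \<open>0 < M\<close> \<open>0 < cg\<close>
    by (intro mild_solution_lower_bound[OF u_meas mild AE_exit_point_ge[OF smooth g_ge]]) auto
  then show ?thesis
    using \<open>0 < cg\<close> by (intro exI[of _ "cg * exp (- M * diameter \<Omega>)"]) auto
qed

end
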